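(* Let $(\mathsf{X},\mathscr{X})$ be a measurable space and $P$ a Markov kernel on $\mathsf{X}\times\mathscr{X}$ satisfying: (i) $P$ is irreducible and aperiodic with unique invariant probability $\pi$; (ii) there exist a non-empty set $\mathsf{C}\in\mathscr{X}$ and reals $u>1$, $M>0$ such that $\sup_{x\in\mathsf{C}}\mathbb{E}_x[u^{\sigma_{\mathsf{C}}}]\leqslant M$, where $\sigma_{\mathsf{C}}=\inf\{n\geqslant 1: X_n\in\mathsf{C}\}$; (iii) there exist $r\in(0,1)$ and $L\geqslant 1$ such that $\mathrm{d}_{\mathrm{TV}}(\delta_xP^n,\pi)\leqslant Lr^n$ for all $x\in\mathsf{C}$ and all $n\geqslant 0$. Let $n\geqslant 1$, $c=(c_0,\ldots,c_{n-1})\in\mathbb{R}_+^n$ and let $f:\mathsf{X}^n\to\mathbb{R}$ be measurable with $|f(x)-f(y)|\leqslant\sum_{i=0}^{n-1}c_i\mathbf{1}_{\{x_i\neq y_i\}}$ for all $x,y\in\mathsf{X}^n$. Set $g_{n-1}=g_{n-1,\pi}=f$ and, for $i\in\{0,\ldots,n-2\}$ and $(x_0,\ldots,x_i)\in\mathsf{X}^{i+1}$, \[ g_i(x_0,\ldots,x_i)=\mathbb{E}_{x_i}[f(x_0,\ldots,x_i,X_1,\ldots,X_{n-1-i})],\qquad g_{i,\pi}(x_0,\ldots,x_i)=\mathbb{E}_{\pi}[f(x_0,\ldots,x_i,X_1,\ldots,X_{n-1-i})]. \] Then for any $i\in\{0,\ldots,n-1\}$ and any $(x_0,\ldots,x_{i-1},x_i)\in\mathsf{X}^i\times\mathsf{C}$,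 \[ |g_i(x_0,\ldots,x_i)-g_{i,\pi}(x_0,\ldots,x_i)|\leqslant 2L\sum_{j=i+1}^{n-1}c_jr^{j-i}\;. \]
   Context: $(X_k)_{k\geqslant 0}$ is the canonical process on $\mathsf{X}^{\mathbb{Z}_+}$; for a probability measure $\xi$, $\mathbb{P}_\xi$ is the law under which $(X_k)$ is a Markov chain with kernel $P$ and initial distribution $\xi$, $\mathbb{E}_\xi$ its expectation, and $\mathbb{P}_x=\mathbb{P}_{\delta_x}$, $\mathbb{E}_x=\mathbb{E}_{\delta_x}$ with $\delta_x$ the Dirac mass at $x$. $\mathrm{d}_{\mathrm{TV}}(\mu,\nu)=\sup_{A\in\mathscr{X}}|\mu(A)-\nu(A)|$ is the total variation distance. An empty sum equals $0$. *)

theory Defs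
  imports "HOL-Probability.Probability"
begin

definition markov_kernel :: "'a measure \<Rightarrow> ('a \<Rightarrow> 'a measure) \<Rightarrow> bool" where
  "markov_kernel M P \<longleftrightarrow> P \<in> M \<rightarrow>\<^sub>M prob_algebra M"

fun kpow :: "'a measure \<Rightarrow> ('a \<Rightarrow> 'a measure) \<Rightarrow> nat \<Rightarrow> 'a \<Rightarrow> 'a measure" where
  "kpow M P 0 x = return M x"
| "kpow M P (Suc n) x = bind (kpow M P n x) P"

definition dTV :: "'a measure \<Rightarrow> 'a measure \<Rightarrow> 'a measure \<Rightarrow> real" where
  "dTV M \<mu> \<nu> = (SUP A\<in>sets M. \<bar>measure \<mu> A - measure \<nu> A\<bar>)"

text \<open>Finite-horizon expectation under the chain started at x:
  path_exp P m h x = E_x[ h(X_1, ..., X_m) ], where the argument of h is the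
  sequence ys with ys k = X_(k+1) for k < m (entries beyond m are irrelevant).\<close>
definition scons :: "'a \<Rightarrow> (nat \<Rightarrow> 'a) \<Rightarrow> nat \<Rightarrow> 'a" where
  "scons y ys = (\<lambda>k. if k = 0 then y else ys (k - 1))"

fun path_exp :: "('a \<Rightarrow> 'a measure) \<Rightarrow> nat \<Rightarrow> ((nat \<Rightarrow> 'a) \<Rightarrow> real) \<Rightarrow> 'a \<Rightarrow> real" where
  "path_exp P 0 h x = h (\<lambda>_. undefined)"
| "path_exp P (Suc m) h x = (\<integral>y. path_exp P m (\<lambda>ys. h (scons y ys)) y \<partial>P x)"

text \<open>P_x(sigma_C = k) for k >= 1, sigma_C the first return time (n >= 1) to C.\<close>
definition hit_prob :: "'a measure \<Rightarrow> ('a \<Rightarrow> 'a measure) \<Rightarrow> 'a set \<Rightarrow> nat \<Rightarrow> 'a \<Rightarrow> real" where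
  "hit_prob M P C k x = path_exp P k
     (\<lambda>ys. (\<Prod>j<k-1. indicator (space M - C) (ys j)) * indicator C (ys (k - 1))) x"

text \<open>E_x[u^sigma_C] in [0, \<infinity>], with u^\<infinity> = \<infinity> (u > 1) on the event sigma_C = \<infinity>.\<close>
definition exp_pow_return :: "'a measure \<Rightarrow> ('a \<Rightarrow> 'a measure) \<Rightarrow> 'a set \<Rightarrow> real \<Rightarrow> 'a \<Rightarrow> ennreal" where
  "exp_pow_return M P C u x =
     (\<Sum>k. ennreal (u ^ Suc k * hit_prob M P C (Suc k) x))
     + (if (\<Sum>k. ennreal (hit_prob M P C (Suc k) x)) < 1 then \<top> else 0)"

definition accessible :: "'a measure \<Rightarrow> ('a \<Rightarrow> 'a measure) \<Rightarrow> 'a set \<Rightarrow> bool" where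
  "accessible M P A \<longleftrightarrow> A \<in> sets M \<and>
     (\<forall>x\<in>space M. \<exists>n\<ge>1. measure (kpow M P n x) A > 0)"

definition small_set :: "'a measure \<Rightarrow> ('a \<Rightarrow> 'a measure) \<Rightarrow> 'a set \<Rightarrow> bool" where
  "small_set M P C \<longleftrightarrow> C \<in> sets M \<and>
     (\<exists>m\<ge>1. \<exists>\<mu>. sets \<mu> = sets M \<and> emeasure \<mu> (space M) \<noteq> 0 \<and>
        (\<forall>x\<in>C. \<forall>A\<in>sets M. emeasure \<mu> A \<le> emeasure (kpow M P m x) A))"

definition irreducible :: "'a measure \<Rightarrow> ('a \<Rightarrow> 'a measure) \<Rightarrow> bool" where
  "irreducible M P \<longleftrightarrow> (\<exists>C. accessible M P C \<and> small_set M P C)"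

definition return_times :: "'a measure \<Rightarrow> ('a \<Rightarrow> 'a measure) \<Rightarrow> 'a set \<Rightarrow> nat set" where
  "return_times M P C = {n. n \<ge> 1 \<and> (\<exists>\<epsilon>>0. \<forall>x\<in>C. measure (kpow M P n x) C \<ge> \<epsilon>)}"

definition aperiodic :: "'a measure \<Rightarrow> ('a \<Rightarrow> 'a measure) \<Rightarrow> bool" where
  "aperiodic M P \<longleftrightarrow> irreducible M P \<and>
     (\<exists>C. accessible M P C \<and> small_set M P C \<and> Gcd (return_times M P C) = 1)"

definition invariant_prob :: "'a measure \<Rightarrow> ('a \<Rightarrow> 'a measure) \<Rightarrow> 'a measure \<Rightarrow> bool" where
  "invariant_prob M P \<pi> \<longleftrightarrow> prob_space \<pi> \<and> sets \<pi> = sets M \<and> bind \<pi> P = \<pi>"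

text \<open>g_i and g_{i,pi} from the statement.  The argument of f is the vector
  (x_0,...,x_i,X_1,...,X_{n-1-i}), restricted to {..<n}.\<close>
definition glue :: "nat \<Rightarrow> nat \<Rightarrow> (nat \<Rightarrow> 'a) \<Rightarrow> (nat \<Rightarrow> 'a) \<Rightarrow> nat \<Rightarrow> 'a" where
  "glue n i x ys = (\<lambda>k. if k \<le> i then x k else if k < n then ys (k - i - 1) else undefined)"

definition g_fun :: "('a \<Rightarrow> 'a measure) \<Rightarrow> nat \<Rightarrow> ((nat \<Rightarrow> 'a) \<Rightarrow> real) \<Rightarrow> nat \<Rightarrow> (nat \<Rightarrow> 'a) \<Rightarrow> real" where
  "g_fun P n f i x = path_exp P (n - 1 - i) (\<lambda>ys. f (glue n i x ys)) (x i)"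

definition g_pi :: "('a \<Rightarrow> 'a measure) \<Rightarrow> 'a measure \<Rightarrow> nat \<Rightarrow> ((nat \<Rightarrow> 'a) \<Rightarrow> real) \<Rightarrow> nat \<Rightarrow> (nat \<Rightarrow> 'a) \<Rightarrow> real" where
  "g_pi P \<pi> n f i x = (\<integral>z. path_exp P (n - 1 - i) (\<lambda>ys. f (glue n i x ys)) z \<partial>\<pi>)"

end

theory Submission
  imports Defs
begin

text \<open>Replace the random coordinates X_1, ..., X_m (m = n - 1 - i) of the argument of f one at a
  time by the constant x_i.  The k-th increment changes only coordinate i + 1 + k, so it is
  bounded by c_(i+1+k); by the Markov property its expectation from a starting point z is the
  integral of a function bounded by c_(i+1+k) against delta_z P^(k+1), and under pi the
  corresponding integral is against pi P^(k+1) = pi.  A function bounded by c integrates to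
  values at most 2 c d_TV apart under two probabilities, whence the bound
  2 c_(i+1+k) L r^(k+1) for each increment.  Only hypothesis (iii) and the invariance of pi
  are needed.\<close>

section \<open>Bounded functions and total variation\<close>

lemma integrable_bounded_prob:
  fixes \<phi> :: "'a \<Rightarrow> real"
  assumes "prob_space N" "sets N = sets M"
    and "\<phi> \<in> borel_measurable M" and "\<forall>x\<in>space M. \<bar>\<phi> x\<bar> \<le> B"
  shows "integrable N \<phi>"
  using assms sets_eq_imp_space_eq[OF assms(2)]
  by (intro finite_measure.integrable_const_bound[where B=B] prob_space.finite_measure AE_I2)
    (simp_all add: measurable_cong_sets[OF assms(2) refl])

lemma abs_integral_le_bound_prob:
  fixes \<phi> :: "'a \<Rightarrow> real"
  assumes N: "prob_space N" "sets N = sets M"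
    and \<phi>: "\<phi> \<in> borel_measurable M" and bound: "\<forall>x\<in>space M. \<bar>\<phi> x\<bar> \<le> B"
  shows "\<bar>\<integral>x. \<phi> x \<partial>N\<bar> \<le> B"
proof -
  interpret prob_space N by (rule N(1))
  have "\<bar>\<integral>x. \<phi> x \<partial>N\<bar> \<le> (\<integral>x. \<bar>\<phi> x\<bar> \<partial>N)"
    using integral_norm_bound[of N \<phi>] by simp
  also have "\<dots> \<le> (\<integral>x. B \<partial>N)"
    using integrable_bounded_prob[OF N \<phi> bound] bound sets_eq_imp_space_eq[OF N(2)]
    by (intro integral_mono) auto
  finally show ?thesis by (simp add: prob_space)
qed

lemma integral_const_add_sum_prob:
  fixes f :: "'i \<Rightarrow> 'a \<Rightarrow> real"
  assumes "prob_space N" "finite S" and int: "\<And>k. k \<in> S \<Longrightarrow> integrable N (f k)"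
  shows "(\<integral>x. b + (\<Sum>k\<in>S. f k x) \<partial>N) = b + (\<Sum>k\<in>S. \<integral>x. f k x \<partial>N)"
proof -
  interpret prob_space N by fact
  have "(\<integral>x. b + (\<Sum>k\<in>S. f k x) \<partial>N) = (\<integral>x. b \<partial>N) + (\<integral>x. (\<Sum>k\<in>S. f k x) \<partial>N)"
    using int by (intro Bochner_Integration.integral_add Bochner_Integration.integrable_sum) auto
  then show ?thesis using int by (simp add: prob_space)
qed

lemma integral_bind_prob_kernel:
  fixes f :: "'b \<Rightarrow> real"
  assumes L: "prob_space L" and N: "N \<in> L \<rightarrow>\<^sub>M prob_algebra K"
    and f: "f \<in> borel_measurable K" and bound: "\<forall>y\<in>space K. \<bar>f y\<bar> \<le> B"
  shows "(\<integral>y. f y \<partial>(L \<bind> N)) = (\<integral>x. (\<integral>y. f y \<partial>N x) \<partial>L)"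
proof (rule integral_bind[where B=B and B'=1])
  show "N \<in> L \<rightarrow>\<^sub>M subprob_algebra K" by (rule measurable_prob_algebraD[OF N])
  show "finite_measure L" by (rule prob_space.finite_measure[OF L])
  show "AE x in L. emeasure (N x) (space (N x)) \<le> ennreal 1"
    using measurable_space[OF N] by (intro AE_I2) (simp add: space_prob_algebra prob_space.emeasure_space_1)
qed (use f bound in auto)

lemma sum_indicator_le_eq_floor:
  fixes t :: real
  assumes "0 \<le> t" "t \<le> real N"
  shows "(\<Sum>k=1..N. if real k \<le> t then 1 else 0 :: real) = of_int \<lfloor>t\<rfloor>"
proof -
  have "real k \<le> t \<longleftrightarrow> k \<le> nat \<lfloor>t\<rfloor>" for k
    using assms(1) by linarith
  moreover have "nat \<lfloor>t\<rfloor> \<le> N"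
    using assms(2) by linarith
  ultimately have "{k\<in>{1..N}. real k \<le> t} = {1..nat \<lfloor>t\<rfloor>}"
    by (simp only: atLeastAtMost_iff) fastforce
  then have "(\<Sum>k=1..N. if real k \<le> t then 1 else 0 :: real) = real (nat \<lfloor>t\<rfloor>)"
    by (simp add: sum.inter_filter[symmetric])
  then show ?thesis using assms by simp
qed

lemma level_sets_approx_integral:
  fixes \<psi> :: "'a \<Rightarrow> real" and N :: nat
  assumes \<mu>: "prob_space \<mu>" "sets \<mu> = sets M"
    and \<psi>: "\<psi> \<in> borel_measurable M" and range: "\<forall>x\<in>space M. 0 \<le> \<psi> x \<and> \<psi> x \<le> 1"
  defines "A k \<equiv> {x\<in>space M. real k \<le> real N * \<psi> x}"
  shows "real N * (\<integral>x. \<psi> x \<partial>\<mu>) - 1 \<le> (\<Sum>k=1..N. measure \<mu> (A k))"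
    and "(\<Sum>k=1..N. measure \<mu> (A k)) \<le> real N * (\<integral>x. \<psi> x \<partial>\<mu>)"
proof -
  interpret prob_space \<mu> by fact
  have space: "space \<mu> = space M" using sets_eq_imp_space_eq[OF \<mu>(2)] .
  have A: "A k \<in> sets \<mu>" for k
    unfolding A_def \<mu>(2) using \<psi> by measurable
  define q where "q x = (\<Sum>k=1..N. indicator (A k) x :: real)" for x
  have q: "real N * \<psi> x - 1 \<le> q x \<and> q x \<le> real N * \<psi> x" if x: "x \<in> space M" for x
  proof -
    have "q x = (\<Sum>k=1..N. if real k \<le> real N * \<psi> x then 1 else 0)"
      unfolding q_def A_def using x by (intro sum.cong) (auto simp: indicator_def)
    also have "\<dots> = of_int \<lfloor>real N * \<psi> x\<rfloor>"
      using range x by (intro sum_indicator_le_eq_floor) (auto intro: mult_left_le)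
    finally show ?thesis by linarith
  qed
  have int_ind: "integrable \<mu> (indicator (A k) :: 'a \<Rightarrow> real)" for k
    using A by (intro integrable_real_indicator) (auto simp: less_top[symmetric])
  then have int_q: "integrable \<mu> q"
    unfolding q_def by (intro Bochner_Integration.integrable_sum)
  have int_\<psi>: "integrable \<mu> \<psi>"
    using range by (intro integrable_bounded_prob[OF \<mu> \<psi>, of 1]) auto
  have sum_eq: "(\<Sum>k=1..N. measure \<mu> (A k)) = (\<integral>x. q x \<partial>\<mu>)"
    unfolding q_def using int_ind A by (simp add: Bochner_Integration.integral_sum)
  have "real N * (\<integral>x. \<psi> x \<partial>\<mu>) - 1 = (\<integral>x. real N * \<psi> x - 1 \<partial>\<mu>)"
    using int_\<psi> by (simp add: prob_space)
  also have "\<dots> \<le> (\<integral>x. q x \<partial>\<mu>)"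
    using q int_\<psi> int_q space by (intro integral_mono) auto
  finally show "real N * (\<integral>x. \<psi> x \<partial>\<mu>) - 1 \<le> (\<Sum>k=1..N. measure \<mu> (A k))"
    unfolding sum_eq .
  have "(\<integral>x. q x \<partial>\<mu>) \<le> (\<integral>x. real N * \<psi> x \<partial>\<mu>)"
    using q int_\<psi> int_q space by (intro integral_mono) auto
  then show "(\<Sum>k=1..N. measure \<mu> (A k)) \<le> real N * (\<integral>x. \<psi> x \<partial>\<mu>)"
    unfolding sum_eq by simp
qed

lemma integral_diff_le_measure_diff_bound:
  fixes \<psi> :: "'a \<Rightarrow> real"
  assumes \<mu>: "prob_space \<mu>" "sets \<mu> = sets M"
    and \<nu>: "prob_space \<nu>" "sets \<nu> = sets M"
    and \<psi>: "\<psi> \<in> borel_measurable M" and range: "\<forall>x\<in>space M. 0 \<le> \<psi> x \<and> \<psi> x \<le> 1"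
    and d: "\<forall>A\<in>sets M. measure \<mu> A - measure \<nu> A \<le> d"
  shows "(\<integral>x. \<psi> x \<partial>\<mu>) - (\<integral>x. \<psi> x \<partial>\<nu>) \<le> d"
proof (rule field_le_epsilon)
  fix e :: real assume "0 < e"
  then obtain N :: nat where N: "0 < N" "inverse (real N) < e"
    using ex_inverse_of_nat_less by blast
  let ?A = "\<lambda>k. {x\<in>space M. real k \<le> real N * \<psi> x}"
  have "?A k \<in> sets M" for k using \<psi> by measurable
  then have "(\<Sum>k=1..N. measure \<mu> (?A k) - measure \<nu> (?A k)) \<le> (\<Sum>k=1..N. d)"
    using d by (intro sum_mono) blast
  then have "(\<Sum>k=1..N. measure \<mu> (?A k)) - (\<Sum>k=1..N. measure \<nu> (?A k)) \<le> real N * d"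
    by (simp add: sum_subtractf)
  then have "real N * ((\<integral>x. \<psi> x \<partial>\<mu>) - (\<integral>x. \<psi> x \<partial>\<nu>)) \<le> real N * (d + inverse (real N))"
    using level_sets_approx_integral(1)[OF \<mu> \<psi> range, of N]
      level_sets_approx_integral(2)[OF \<nu> \<psi> range, of N] N(1)
    by (simp add: algebra_simps)
  then show "(\<integral>x. \<psi> x \<partial>\<mu>) - (\<integral>x. \<psi> x \<partial>\<nu>) \<le> d + e"
    using N by (simp add: mult_le_cancel_left_pos)
qed

lemma abs_measure_diff_le_dTV:
  assumes "prob_space \<mu>" "prob_space \<nu>" "A \<in> sets M"
  shows "\<bar>measure \<mu> A - measure \<nu> A\<bar> \<le> dTV M \<mu> \<nu>"
  unfolding dTV_def
proof (rule cSUP_upper[OF assms(3)])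
  have "\<bar>measure \<mu> B - measure \<nu> B\<bar> \<le> 1" for B
    using prob_space.prob_le_1[OF assms(1), of B] prob_space.prob_le_1[OF assms(2), of B]
      measure_nonneg[of \<mu> B] measure_nonneg[of \<nu> B] by linarith
  then show "bdd_above ((\<lambda>A. \<bar>measure \<mu> A - measure \<nu> A\<bar>) ` sets M)"
    by (intro bdd_aboveI[where M=1]) auto
qed

lemma abs_integral_diff_le_dTV_unit:
  fixes \<psi> :: "'a \<Rightarrow> real"
  assumes \<mu>: "prob_space \<mu>" "sets \<mu> = sets M"
    and \<nu>: "prob_space \<nu>" "sets \<nu> = sets M"
    and \<psi>: "\<psi> \<in> borel_measurable M" and range: "\<forall>x\<in>space M. 0 \<le> \<psi> x \<and> \<psi> x \<le> 1"
  shows "\<bar>(\<integral>x. \<psi> x \<partial>\<mu>) - (\<integral>x. \<psi> x \<partial>\<nu>)\<bar> \<le> dTV M \<mu> \<nu>"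
proof -
  have d: "\<forall>A\<in>sets M. \<bar>measure \<mu> A - measure \<nu> A\<bar> \<le> dTV M \<mu> \<nu>"
    using abs_measure_diff_le_dTV[OF \<mu>(1) \<nu>(1)] by blast
  have "(\<integral>x. \<psi> x \<partial>\<mu>) - (\<integral>x. \<psi> x \<partial>\<nu>) \<le> dTV M \<mu> \<nu>"
    using d by (intro integral_diff_le_measure_diff_bound[OF \<mu> \<nu> \<psi> range]) (auto simp: abs_le_iff)
  moreover have "(\<integral>x. \<psi> x \<partial>\<nu>) - (\<integral>x. \<psi> x \<partial>\<mu>) \<le> dTV M \<mu> \<nu>"
    using d by (intro integral_diff_le_measure_diff_bound[OF \<nu> \<mu> \<psi> range]) (auto simp: abs_le_iff)
  ultimately show ?thesis by linarith
qed

lemma abs_integral_diff_le_dTV: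
  fixes \<phi> :: "'a \<Rightarrow> real"
  assumes \<mu>: "prob_space \<mu>" "sets \<mu> = sets M"
    and \<nu>: "prob_space \<nu>" "sets \<nu> = sets M"
    and \<phi>: "\<phi> \<in> borel_measurable M" and bound: "\<forall>x\<in>space M. \<bar>\<phi> x\<bar> \<le> c"
  shows "\<bar>(\<integral>x. \<phi> x \<partial>\<mu>) - (\<integral>x. \<phi> x \<partial>\<nu>)\<bar> \<le> 2 * c * dTV M \<mu> \<nu>"
proof -
  have "space M \<noteq> {}"
    using prob_space.not_empty[OF \<mu>(1)] sets_eq_imp_space_eq[OF \<mu>(2)] by simp
  then have "0 \<le> c" using bound by (meson abs_ge_zero ex_in_conv order_trans)
  then consider "c = 0" | "0 < c" by linarith
  then show ?thesis
  proof cases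
    case 1
    then have "(\<integral>x. \<phi> x \<partial>N) = (\<integral>x. 0 \<partial>N)" if "sets N = sets M" for N
      using bound sets_eq_imp_space_eq[OF that] by (intro Bochner_Integration.integral_cong) auto
    then show ?thesis using \<mu>(2) \<nu>(2) 1 by simp
  next
    case 2
    define \<psi> where "\<psi> x = (\<phi> x + c) / (2 * c)" for x
    have \<psi>: "\<psi> \<in> borel_measurable M" unfolding \<psi>_def using \<phi> by measurable
    have range: "\<forall>x\<in>space M. 0 \<le> \<psi> x \<and> \<psi> x \<le> 1"
    proof
      fix x assume "x \<in> space M"
      then have "0 \<le> \<phi> x + c" "\<phi> x + c \<le> 2 * c" using bound by (auto simp: abs_le_iff)
      then show "0 \<le> \<psi> x \<and> \<psi> x \<le> 1" using 2 by (simp add: \<psi>_def)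
    qed
    have \<psi>_eq: "(\<integral>x. \<psi> x \<partial>N) = ((\<integral>x. \<phi> x \<partial>N) + c) / (2 * c)"
      if "prob_space N" "sets N = sets M" for N
    proof -
      interpret prob_space N by (rule that(1))
      show ?thesis using integrable_bounded_prob[OF that \<phi> bound] by (simp add: \<psi>_def prob_space)
    qed
    have "\<bar>(\<integral>x. \<phi> x \<partial>\<mu>) - (\<integral>x. \<phi> x \<partial>\<nu>)\<bar> / (2 * c) \<le> dTV M \<mu> \<nu>"
      using abs_integral_diff_le_dTV_unit[OF \<mu> \<nu> \<psi> range] 2
      by (simp add: \<psi>_eq[OF \<mu>] \<psi>_eq[OF \<nu>] diff_divide_distrib[symmetric])
    then show ?thesis using 2 by (simp add: pos_divide_le_eq mult_ac)
  qed
qed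

lemma markov_kernelD:
  assumes "markov_kernel M P" "x \<in> space M"
  shows "prob_space (P x)" "sets (P x) = sets M" "space (P x) = space M"
  using measurable_space[OF assms(1)[unfolded markov_kernel_def] assms(2)]
  by (auto simp: space_prob_algebra dest: sets_eq_imp_space_eq)

lemma kpow_0_fun: "kpow M P 0 = return M"
  by (rule ext) simp

lemma kpow_Suc_fun: "kpow M P (Suc k) = (\<lambda>x. kpow M P k x \<bind> P)"
  by (rule ext) simp

lemma kpow_measurable:
  assumes "markov_kernel M P"
  shows "kpow M P k \<in> M \<rightarrow>\<^sub>M prob_algebra M"
proof (induction k)
  case (Suc k)
  then show ?case
    unfolding kpow_Suc_fun using assms[unfolded markov_kernel_def] by (rule measurable_bind_prob_space)
qed (simp add: kpow_0_fun)

lemma kpowD: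
  assumes "markov_kernel M P" "x \<in> space M"
  shows "prob_space (kpow M P k x)" "sets (kpow M P k x) = sets M"
  using measurable_space[OF kpow_measurable[OF assms(1)] assms(2)]
  by (auto simp: space_prob_algebra)

lemma kpow_one:
  assumes "markov_kernel M P" "x \<in> space M"
  shows "kpow M P 1 x = P x"
  using bind_return[OF measurable_prob_algebraD assms(2)] assms(1)
  by (simp add: markov_kernel_def)

lemma kpow_Suc_left:
  assumes K: "markov_kernel M P" and x: "x \<in> space M"
  shows "kpow M P (Suc k) x = P x \<bind> kpow M P k"
  using x
proof (induction k arbitrary: x)
  case 0
  then show ?case
    using kpow_one[OF K 0] bind_return''[of "P x" M] markov_kernelD(2)[OF K 0] by (simp add: kpow_0_fun)
next
  case (Suc k)
  have "kpow M P (Suc (Suc k)) x = (P x \<bind> kpow M P k) \<bind> P" using Suc by simp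
  also have "\<dots> = P x \<bind> (\<lambda>y. kpow M P k y \<bind> P)"
    using K by (intro bind_assoc[where N=M and R=M])
      (simp_all add: measurable_cong_sets[OF markov_kernelD(2)[OF K Suc.prems] refl]
        measurable_prob_algebraD kpow_measurable markov_kernel_def)
  finally show ?case by (simp add: kpow_Suc_fun)
qed

lemma bind_kpow_invariant:
  assumes K: "markov_kernel M P" and inv: "invariant_prob M P \<pi>"
  shows "\<pi> \<bind> kpow M P k = \<pi>"
proof (induction k)
  case 0
  then show ?case using bind_return''[of \<pi> M] inv by (simp add: kpow_0_fun invariant_prob_def)
next
  case (Suc k)
  have sets_\<pi>: "sets \<pi> = sets M" using inv by (simp add: invariant_prob_def)
  have "\<pi> \<bind> kpow M P (Suc k) = (\<pi> \<bind> kpow M P k) \<bind> P"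
    unfolding kpow_Suc_fun using K
    by (intro bind_assoc[where N=M and R=M, symmetric])
      (simp_all add: measurable_cong_sets[OF sets_\<pi> refl]
        measurable_prob_algebraD kpow_measurable markov_kernel_def)
  also have "\<dots> = \<pi>" using Suc inv by (simp add: invariant_prob_def)
  finally show ?case .
qed

lemma integral_kpow_invariant:
  fixes \<phi> :: "'a \<Rightarrow> real"
  assumes K: "markov_kernel M P" and inv: "invariant_prob M P \<pi>"
    and \<phi>: "\<phi> \<in> borel_measurable M" and bound: "\<forall>z\<in>space M. \<bar>\<phi> z\<bar> \<le> B"
  shows "(\<integral>z. (\<integral>w. \<phi> w \<partial>kpow M P k z) \<partial>\<pi>) = (\<integral>w. \<phi> w \<partial>\<pi>)"
proof -
  have \<pi>: "prob_space \<pi>" "sets \<pi> = sets M" using inv by (auto simp: invariant_prob_def)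
  have "kpow M P k \<in> \<pi> \<rightarrow>\<^sub>M prob_algebra M"
    by (simp add: measurable_cong_sets[OF \<pi>(2) refl] kpow_measurable[OF K])
  then have "(\<integral>w. \<phi> w \<partial>(\<pi> \<bind> kpow M P k)) = (\<integral>z. (\<integral>w. \<phi> w \<partial>kpow M P k z) \<partial>\<pi>)"
    by (rule integral_bind_prob_kernel[OF \<pi>(1) _ \<phi> bound])
  then show ?thesis by (simp only: bind_kpow_invariant[OF K inv])
qed

section \<open>Path expectations\<close>

lemma measurable_scons:
  "(\<lambda>(y, ys). scons y ys) \<in> M \<Otimes>\<^sub>M PiM {..<m} (\<lambda>_. M) \<rightarrow>\<^sub>M PiM {..<Suc m} (\<lambda>_. M)"
proof (rule measurable_PiM_single')
  fix j assume j: "j \<in> {..<Suc m}"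
  show "(\<lambda>\<omega>. (case \<omega> of (y, ys) \<Rightarrow> scons y ys) j) \<in> M \<Otimes>\<^sub>M PiM {..<m} (\<lambda>_. M) \<rightarrow>\<^sub>M M"
  proof (cases j)
    case (Suc l)
    then have "l \<in> {..<m}" using j by simp
    then show ?thesis
      using measurable_compose[OF measurable_snd measurable_component_singleton, of l "{..<m}" M]
      by (simp add: Suc scons_def case_prod_beta comp_def)
  qed (simp add: scons_def case_prod_beta)
next
  show "(\<lambda>(y, ys). scons y ys) \<in> space (M \<Otimes>\<^sub>M PiM {..<m} (\<lambda>_. M)) \<rightarrow> (\<Pi>\<^sub>E j\<in>{..<Suc m}. space M)"
  proof
    fix p assume "p \<in> space (M \<Otimes>\<^sub>M PiM {..<m} (\<lambda>_. M))"
    then obtain y ys where "p = (y, ys)" "y \<in> space M" "ys \<in> (\<Pi>\<^sub>E j\<in>{..<m}. space M)"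
      by (auto simp: space_pair_measure space_PiM)
    then show "(\<lambda>(y, ys). scons y ys) p \<in> (\<Pi>\<^sub>E j\<in>{..<Suc m}. space M)"
      by (auto simp: scons_def PiE_iff extensional_def)
  qed
qed

lemma measurable_scons1:
  "y \<in> space M \<Longrightarrow> scons y \<in> PiM {..<m} (\<lambda>_. M) \<rightarrow>\<^sub>M PiM {..<Suc m} (\<lambda>_. M)"
  using measurable_Pair2[OF measurable_scons] by simp

lemma scons_in_space:
  "y \<in> space M \<Longrightarrow> ys \<in> space (PiM {..<m} (\<lambda>_. M)) \<Longrightarrow>
    scons y ys \<in> space (PiM {..<Suc m} (\<lambda>_. M))"
  by (metis measurable_space measurable_scons1)

text \<open>The law of (X_1, ..., X_m) under P_x.\<close>
fun path_measure :: "'a measure \<Rightarrow> ('a \<Rightarrow> 'a measure) \<Rightarrow> nat \<Rightarrow> 'a \<Rightarrow> (nat \<Rightarrow> 'a) measure" where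
  "path_measure M P 0 x = return (PiM {..<0} (\<lambda>_. M)) (\<lambda>_. undefined)"
| "path_measure M P (Suc m) x =
     P x \<bind> (\<lambda>y. distr (path_measure M P m y) (PiM {..<Suc m} (\<lambda>_. M)) (scons y))"

lemma measurable_distr_scons_path_measure:
  assumes "path_measure M P m \<in> M \<rightarrow>\<^sub>M prob_algebra (PiM {..<m} (\<lambda>_. M))"
  shows "(\<lambda>y. distr (path_measure M P m y) (PiM {..<Suc m} (\<lambda>_. M)) (scons y))
           \<in> M \<rightarrow>\<^sub>M prob_algebra (PiM {..<Suc m} (\<lambda>_. M))"
  by (rule measurable_distr_prob_space2[OF assms measurable_scons])

lemma path_measure_measurable:
  assumes K: "markov_kernel M P"
  shows "path_measure M P m \<in> M \<rightarrow>\<^sub>M prob_algebra (PiM {..<m} (\<lambda>_. M))"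
proof (induction m)
  case 0
  have "return (PiM {..<0} (\<lambda>_. M)) (\<lambda>_. undefined) \<in> space (prob_algebra (PiM {..<0::nat} (\<lambda>_. M)))"
    by (rule measurable_space[OF measurable_return_prob_space]) (simp add: space_PiM)
  then show ?case by simp
next
  case (Suc m)
  have "path_measure M P (Suc m) =
      (\<lambda>x. P x \<bind> (\<lambda>y. distr (path_measure M P m y) (PiM {..<Suc m} (\<lambda>_. M)) (scons y)))"
    by (rule ext) simp
  then show ?case
    using measurable_bind_prob_space[OF K[unfolded markov_kernel_def]
        measurable_distr_scons_path_measure[OF Suc]] by simp
qed

lemma path_measureD:
  assumes "markov_kernel M P" "x \<in> space M"
  shows "prob_space (path_measure M P m x)"
    "sets (path_measure M P m x) = sets (PiM {..<m} (\<lambda>_. M))"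
    "space (path_measure M P m x) = space (PiM {..<m} (\<lambda>_. M))"
  using measurable_space[OF path_measure_measurable[OF assms(1)] assms(2)]
  by (auto simp: space_prob_algebra dest: sets_eq_imp_space_eq)

lemma path_exp_eq_integral:
  assumes K: "markov_kernel M P"
  shows "h \<in> borel_measurable (PiM {..<m} (\<lambda>_. M)) \<Longrightarrow>
    \<forall>ys\<in>space (PiM {..<m} (\<lambda>_. M)). \<bar>h ys\<bar> \<le> B \<Longrightarrow> x \<in> space M \<Longrightarrow>
    path_exp P m h x = (\<integral>ys. h ys \<partial>path_measure M P m x)"
proof (induction m arbitrary: h x)
  case 0
  have "(\<lambda>_. undefined) \<in> space (PiM {..<0::nat} (\<lambda>_. M))" by (simp add: space_PiM)
  then show ?case using 0 by (simp add: integral_return)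
next
  case (Suc m)
  note h = Suc.prems(1,2) and x = Suc.prems(3)
  let ?D = "\<lambda>y. distr (path_measure M P m y) (PiM {..<Suc m} (\<lambda>_. M)) (scons y)"
  have "?D \<in> P x \<rightarrow>\<^sub>M prob_algebra (PiM {..<Suc m} (\<lambda>_. M))"
    by (simp add: measurable_cong_sets[OF markov_kernelD(2)[OF K x] refl]
        measurable_distr_scons_path_measure[OF path_measure_measurable[OF K]])
  then have "(\<integral>ys. h ys \<partial>path_measure M P (Suc m) x) = (\<integral>y. (\<integral>ys. h ys \<partial>?D y) \<partial>P x)"
    unfolding path_measure.simps by (rule integral_bind_prob_kernel[OF markov_kernelD(1)[OF K x] _ h])
  also have "\<dots> = (\<integral>y. path_exp P m (\<lambda>ys. h (scons y ys)) y \<partial>P x)"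
  proof (rule Bochner_Integration.integral_cong[OF refl])
    fix y assume "y \<in> space (P x)"
    then have y: "y \<in> space M" using markov_kernelD[OF K x] by simp
    have "(\<integral>ys. h ys \<partial>?D y) = (\<integral>ys. h (scons y ys) \<partial>path_measure M P m y)"
      by (rule integral_distr)
        (simp_all add: measurable_cong_sets[OF path_measureD(2)[OF K y] refl] measurable_scons1[OF y] h)
    also have "\<dots> = path_exp P m (\<lambda>ys. h (scons y ys)) y"
      using h scons_in_space[OF y]
      by (intro Suc.IH[symmetric] measurable_compose[OF measurable_scons1[OF y]] y) auto
    finally show "(\<integral>ys. h ys \<partial>?D y) = path_exp P m (\<lambda>ys. h (scons y ys)) y" .
  qed
  finally show ?case by simp
qed

lemma abs_path_exp_le:
  assumes K: "markov_kernel M P"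
    and h: "h \<in> borel_measurable (PiM {..<m} (\<lambda>_. M))"
    and bound: "\<forall>ys\<in>space (PiM {..<m} (\<lambda>_. M)). \<bar>h ys\<bar> \<le> B"
    and z: "z \<in> space M"
  shows "\<bar>path_exp P m h z\<bar> \<le> B"
  unfolding path_exp_eq_integral[OF K h bound z]
  by (rule abs_integral_le_bound_prob[OF path_measureD(1,2)[OF K z] h bound])

lemma path_exp_cong:
  assumes K: "markov_kernel M P"
  shows "\<forall>ys\<in>space (PiM {..<m} (\<lambda>_. M)). h ys = h' ys \<Longrightarrow> z \<in> space M \<Longrightarrow>
    path_exp P m h z = path_exp P m h' z"
proof (induction m arbitrary: h h' z)
  case 0
  have "(\<lambda>_. undefined) \<in> space (PiM {..<0::nat} (\<lambda>_. M))" by (simp add: space_PiM)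
  then show ?case using 0 by simp
next
  case (Suc m)
  show ?case
    unfolding path_exp.simps
  proof (rule Bochner_Integration.integral_cong[OF refl])
    fix y assume "y \<in> space (P z)"
    then have y: "y \<in> space M" using markov_kernelD(3)[OF K Suc.prems(2)] by simp
    show "path_exp P m (\<lambda>ys. h (scons y ys)) y = path_exp P m (\<lambda>ys. h' (scons y ys)) y"
      using Suc.prems(1) scons_in_space[OF y] by (intro Suc.IH y) blast
  qed
qed

lemma path_exp_const_add_sum:
  fixes D :: "'i \<Rightarrow> (nat \<Rightarrow> 'a) \<Rightarrow> real"
  assumes K: "markov_kernel M P" and S: "finite S"
    and D: "\<And>k. k \<in> S \<Longrightarrow> D k \<in> borel_measurable (PiM {..<m} (\<lambda>_. M))"
    and bound: "\<And>k. k \<in> S \<Longrightarrow> \<forall>ys\<in>space (PiM {..<m} (\<lambda>_. M)). \<bar>D k ys\<bar> \<le> B k"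
    and z: "z \<in> space M"
  shows "path_exp P m (\<lambda>ys. b + (\<Sum>k\<in>S. D k ys)) z = b + (\<Sum>k\<in>S. path_exp P m (D k) z)"
proof -
  have "\<forall>ys\<in>space (PiM {..<m} (\<lambda>_. M)). \<bar>b + (\<Sum>k\<in>S. D k ys)\<bar> \<le> \<bar>b\<bar> + (\<Sum>k\<in>S. B k)"
  proof
    fix ys assume ys: "ys \<in> space (PiM {..<m} (\<lambda>_. M))"
    have "\<bar>\<Sum>k\<in>S. D k ys\<bar> \<le> (\<Sum>k\<in>S. B k)"
      using bound ys by (intro order.trans[OF sum_abs] sum_mono) blast
    then show "\<bar>b + (\<Sum>k\<in>S. D k ys)\<bar> \<le> \<bar>b\<bar> + (\<Sum>k\<in>S. B k)" by linarith
  qed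
  then have "path_exp P m (\<lambda>ys. b + (\<Sum>k\<in>S. D k ys)) z
      = (\<integral>ys. b + (\<Sum>k\<in>S. D k ys) \<partial>path_measure M P m z)"
    using D by (intro path_exp_eq_integral[OF K _ _ z]) auto
  also have "\<dots> = b + (\<Sum>k\<in>S. \<integral>ys. D k ys \<partial>path_measure M P m z)"
    using integrable_bounded_prob[OF path_measureD(1,2)[OF K z] D bound]
    by (intro integral_const_add_sum_prob[OF path_measureD(1)[OF K z] S])
  also have "\<dots> = b + (\<Sum>k\<in>S. path_exp P m (D k) z)"
    using path_exp_eq_integral[OF K D bound z] by simp
  finally show ?thesis .
qed

lemma path_exp_scons_measurable:
  assumes K: "markov_kernel M P"
    and G: "G \<in> borel_measurable (PiM {..<Suc m} (\<lambda>_. M))"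
    and bound: "\<forall>ys\<in>space (PiM {..<Suc m} (\<lambda>_. M)). \<bar>G ys\<bar> \<le> B"
  shows "(\<lambda>z. path_exp P m (\<lambda>ys. G (scons z ys)) z) \<in> borel_measurable M"
proof -
  let ?N = "PiM {..<Suc m} (\<lambda>_. M)"
  have "path_exp P m (\<lambda>ys. G (scons z ys)) z = (\<integral>ys. G ys \<partial>distr (path_measure M P m z) ?N (scons z))"
    if z: "z \<in> space M" for z
  proof -
    have "path_exp P m (\<lambda>ys. G (scons z ys)) z = (\<integral>ys. G (scons z ys) \<partial>path_measure M P m z)"
      using bound scons_in_space[OF z]
      by (intro path_exp_eq_integral[OF K measurable_compose[OF measurable_scons1[OF z] G] _ z]) auto
    also have "\<dots> = (\<integral>ys. G ys \<partial>distr (path_measure M P m z) ?N (scons z))"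
      by (rule integral_distr[symmetric])
        (simp_all add: measurable_cong_sets[OF path_measureD(2)[OF K z] refl] measurable_scons1[OF z] G)
    finally show ?thesis .
  qed
  moreover have "(\<lambda>z. \<integral>ys. G ys \<partial>distr (path_measure M P m z) ?N (scons z)) \<in> borel_measurable M"
    by (rule measurable_compose[OF measurable_prob_algebraD[OF measurable_distr_scons_path_measure[OF
            path_measure_measurable[OF K]]] integral_measurable_subprob_algebra[OF G]])
  ultimately show ?thesis by (simp cong: measurable_cong)
qed

lemma abs_path_exp_scons_le:
  assumes K: "markov_kernel M P"
    and G: "G \<in> borel_measurable (PiM {..<Suc m} (\<lambda>_. M))"
    and bound: "\<forall>ys\<in>space (PiM {..<Suc m} (\<lambda>_. M)). \<bar>G ys\<bar> \<le> B"
    and z: "z \<in> space M"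
  shows "\<bar>path_exp P m (\<lambda>ys. G (scons z ys)) z\<bar> \<le> B"
  using bound scons_in_space[OF z]
  by (intro abs_path_exp_le[OF K measurable_compose[OF measurable_scons1[OF z] G] _ z]) auto

text \<open>Markov property: the expectation of a function of (X_(k+1), ..., X_(k+1+m)) under P_x
  is an integral against delta_x P^(k+1).\<close>
lemma path_exp_shift:
  assumes K: "markov_kernel M P"
    and G: "G \<in> borel_measurable (PiM {..<Suc m} (\<lambda>_. M))"
    and bound: "\<forall>ys\<in>space (PiM {..<Suc m} (\<lambda>_. M)). \<bar>G ys\<bar> \<le> B"
  shows "x \<in> space M \<Longrightarrow> path_exp P (k + Suc m) (\<lambda>ys. G (\<lambda>j. ys (j + k))) x
     = (\<integral>z. path_exp P m (\<lambda>ys. G (scons z ys)) z \<partial>kpow M P (Suc k) x)"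
proof (induction k arbitrary: x)
  case 0
  then show ?case by (simp add: kpow_one[OF K 0, simplified])
next
  case (Suc k)
  let ?\<phi> = "\<lambda>z. path_exp P m (\<lambda>ys. G (scons z ys)) z"
  have shift: "(\<lambda>ys. G (\<lambda>j. scons y ys (j + Suc k))) = (\<lambda>ys. G (\<lambda>j. ys (j + k)))" for y
    by (simp add: scons_def)
  have \<phi>_bound: "\<forall>z\<in>space M. \<bar>?\<phi> z\<bar> \<le> B"
    using abs_path_exp_scons_le[OF K G bound] by blast
  have "path_exp P (Suc k + Suc m) (\<lambda>ys. G (\<lambda>j. ys (j + Suc k))) x
      = (\<integral>y. path_exp P (k + Suc m) (\<lambda>ys. G (\<lambda>j. ys (j + k))) y \<partial>P x)"
    by (simp only: add_Suc path_exp.simps(2) shift)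
  also have "\<dots> = (\<integral>y. (\<integral>z. ?\<phi> z \<partial>kpow M P (Suc k) y) \<partial>P x)"
    using markov_kernelD(3)[OF K Suc.prems]
    by (intro Bochner_Integration.integral_cong refl Suc.IH) simp
  also have "\<dots> = (\<integral>z. ?\<phi> z \<partial>(P x \<bind> kpow M P (Suc k)))"
    by (rule integral_bind_prob_kernel[symmetric, OF markov_kernelD(1)[OF K Suc.prems] _
          path_exp_scons_measurable[OF K G bound] \<phi>_bound])
      (simp add: measurable_cong_sets[OF markov_kernelD(2)[OF K Suc.prems] refl] kpow_measurable[OF K]
        del: kpow.simps)
  also have "\<dots> = (\<integral>z. ?\<phi> z \<partial>kpow M P (Suc (Suc k)) x)"
    by (simp only: kpow_Suc_left[OF K Suc.prems, of "Suc k"])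
  finally show ?case .
qed

section \<open>Telescoping over the coordinates\<close>

definition prefix_const :: "nat \<Rightarrow> 'a \<Rightarrow> (nat \<Rightarrow> 'a) \<Rightarrow> nat \<Rightarrow> 'a" where
  "prefix_const k a zs = (\<lambda>j. if j < k then a else zs (j - k))"

lemma measurable_prefix_const:
  assumes a: "a \<in> space M"
  shows "prefix_const k a \<in> PiM {..<m} (\<lambda>_. M) \<rightarrow>\<^sub>M PiM {..<k + m} (\<lambda>_. M)"
proof (rule measurable_PiM_single')
  fix j assume j: "j \<in> {..<k + m}"
  show "(\<lambda>zs. prefix_const k a zs j) \<in> PiM {..<m} (\<lambda>_. M) \<rightarrow>\<^sub>M M"
  proof (cases "j < k")
    case False
    then have "j - k \<in> {..<m}" using j by auto
    then show ?thesis using False by (simp add: prefix_const_def)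
  qed (simp add: prefix_const_def a)
qed (auto simp: space_PiM PiE_iff extensional_def prefix_const_def a)

lemma measurable_shift:
  fixes k m :: nat
  shows "(\<lambda>ys j. ys (j + k)) \<in> PiM {..<m} (\<lambda>_. M) \<rightarrow>\<^sub>M PiM {..<m - k} (\<lambda>_. M)"
proof (rule measurable_PiM_single')
  fix j assume "j \<in> {..<m - k}"
  then have "j + k \<in> {..<m}" by simp
  then show "(\<lambda>ys. ys (j + k)) \<in> PiM {..<m} (\<lambda>_. M) \<rightarrow>\<^sub>M M" by simp
qed (auto simp: space_PiM PiE_iff extensional_def less_diff_conv)

definition bounded_differences ::
    "'a measure \<Rightarrow> nat \<Rightarrow> (nat \<Rightarrow> real) \<Rightarrow> ((nat \<Rightarrow> 'a) \<Rightarrow> real) \<Rightarrow> bool" where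
  "bounded_differences M m d h \<longleftrightarrow>
     (\<forall>ys\<in>space (PiM {..<m} (\<lambda>_. M)). \<forall>zs\<in>space (PiM {..<m} (\<lambda>_. M)).
        \<bar>h ys - h zs\<bar> \<le> (\<Sum>j<m. d j * (if ys j \<noteq> zs j then 1 else 0)))"

text \<open>With coordinates below k already frozen at a and zs holding coordinates k, k+1, ...,
  telescope_step h a k zs is the change of h caused by freezing coordinate k at a as well.\<close>
definition telescope_step :: "((nat \<Rightarrow> 'a) \<Rightarrow> real) \<Rightarrow> 'a \<Rightarrow> nat \<Rightarrow> (nat \<Rightarrow> 'a) \<Rightarrow> real" where
  "telescope_step h a k zs = h (prefix_const k a zs) - h (prefix_const k a (zs(0 := a)))"

lemma measurable_prefix_const_upd:
  assumes a: "a \<in> space M" and k: "k < m"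
  shows "prefix_const k a \<in> PiM {..<m - k} (\<lambda>_. M) \<rightarrow>\<^sub>M PiM {..<m} (\<lambda>_. M)"
    and "(\<lambda>zs. prefix_const k a (zs(0 := a))) \<in> PiM {..<m - k} (\<lambda>_. M) \<rightarrow>\<^sub>M PiM {..<m} (\<lambda>_. M)"
proof -
  show prefix: "prefix_const k a \<in> PiM {..<m - k} (\<lambda>_. M) \<rightarrow>\<^sub>M PiM {..<m} (\<lambda>_. M)"
    using measurable_prefix_const[OF a, of k "m - k"] k by simp
  have "{..<m - k} = {..<m - k} \<union> {0}" using k by auto
  then have "(\<lambda>zs. zs(0 := a)) \<in> PiM {..<m - k} (\<lambda>_. M) \<rightarrow>\<^sub>M PiM {..<m - k} (\<lambda>_. M)"
    using a by (intro measurable_fun_upd[OF _ measurable_ident_sets]) auto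
  then show "(\<lambda>zs. prefix_const k a (zs(0 := a))) \<in> PiM {..<m - k} (\<lambda>_. M) \<rightarrow>\<^sub>M PiM {..<m} (\<lambda>_. M)"
    using prefix by (rule measurable_compose)
qed

lemma measurable_telescope_step:
  assumes h: "h \<in> borel_measurable (PiM {..<m} (\<lambda>_. M))" and a: "a \<in> space M" and k: "k < m"
  shows "telescope_step h a k \<in> borel_measurable (PiM {..<m - k} (\<lambda>_. M))"
  unfolding telescope_step_def
  using measurable_compose[OF measurable_prefix_const_upd(1)[OF a k] h]
    measurable_compose[OF measurable_prefix_const_upd(2)[OF a k] h]
  by (rule borel_measurable_diff)

lemma abs_telescope_step_le:
  assumes bd: "bounded_differences M m d h" and d: "0 \<le> d k"
    and a: "a \<in> space M" and k: "k < m" and zs: "zs \<in> space (PiM {..<m - k} (\<lambda>_. M))"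
  shows "\<bar>telescope_step h a k zs\<bar> \<le> d k"
proof -
  let ?u = "prefix_const k a zs" and ?v = "prefix_const k a (zs(0 := a))"
  have "?u \<in> space (PiM {..<m} (\<lambda>_. M))" "?v \<in> space (PiM {..<m} (\<lambda>_. M))"
    using measurable_space[OF measurable_prefix_const_upd(1)[OF a k] zs]
      measurable_space[OF measurable_prefix_const_upd(2)[OF a k] zs] by simp_all
  then have "\<bar>telescope_step h a k zs\<bar> \<le> (\<Sum>j<m. d j * (if ?u j \<noteq> ?v j then 1 else 0))"
    using bd by (simp add: telescope_step_def bounded_differences_def)
  also have "\<dots> \<le> (\<Sum>j<m. if j = k then d j else 0)"
    using d by (intro sum_mono) (auto simp: prefix_const_def)
  also have "\<dots> = d k" using k by simp
  finally show ?thesis .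
qed

lemma telescope_step_sum:
  fixes m :: nat
  assumes ys: "ys \<in> space (PiM {..<m} (\<lambda>_. M))"
  shows "h ys = h (prefix_const m a (\<lambda>_. undefined)) + (\<Sum>k<m. telescope_step h a k (\<lambda>j. ys (j + k)))"
proof -
  define W where "W k = h (prefix_const k a (\<lambda>j. ys (j + k)))" for k
  have "telescope_step h a k (\<lambda>j. ys (j + k)) = W k - W (Suc k)" for k
  proof -
    have "prefix_const k a ((\<lambda>j. ys (j + k))(0 := a)) = prefix_const (Suc k) a (\<lambda>j. ys (j + Suc k))"
      by (auto simp: prefix_const_def fun_eq_iff)
    then show ?thesis by (simp add: telescope_step_def W_def)
  qed
  then have "(\<Sum>k<m. telescope_step h a k (\<lambda>j. ys (j + k))) = W 0 - W m"
    by (simp add: sum_lessThan_telescope')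
  moreover have "W 0 = h ys" by (simp add: W_def prefix_const_def)
  moreover have "W m = h (prefix_const m a (\<lambda>_. undefined))"
    using ys by (simp add: W_def prefix_const_def space_PiM PiE_def extensional_def)
  ultimately show ?thesis by simp
qed

text \<open>The expectation of the k-th telescope step given X_(k+1) = w.\<close>
definition telescope_exp ::
    "('a \<Rightarrow> 'a measure) \<Rightarrow> nat \<Rightarrow> ((nat \<Rightarrow> 'a) \<Rightarrow> real) \<Rightarrow> 'a \<Rightarrow> nat \<Rightarrow> 'a \<Rightarrow> real" where
  "telescope_exp P m h a k w = path_exp P (m - Suc k) (\<lambda>ys. telescope_step h a k (scons w ys)) w"

lemma telescope_step_measurable_bounded:
  assumes h: "h \<in> borel_measurable (PiM {..<m} (\<lambda>_. M))" and bd: "bounded_differences M m d h"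
    and d: "0 \<le> d k" and a: "a \<in> space M" and k: "k < m"
  shows "telescope_step h a k \<in> borel_measurable (PiM {..<Suc (m - Suc k)} (\<lambda>_. M))"
    and "\<forall>zs\<in>space (PiM {..<Suc (m - Suc k)} (\<lambda>_. M)). \<bar>telescope_step h a k zs\<bar> \<le> d k"
proof -
  have "Suc (m - Suc k) = m - k" using k by simp
  then show "telescope_step h a k \<in> borel_measurable (PiM {..<Suc (m - Suc k)} (\<lambda>_. M))"
    and "\<forall>zs\<in>space (PiM {..<Suc (m - Suc k)} (\<lambda>_. M)). \<bar>telescope_step h a k zs\<bar> \<le> d k"
    using measurable_telescope_step[OF h a k] abs_telescope_step_le[OF bd d a k] by simp_all
qed

lemma telescope_exp_measurable_bounded:
  assumes K: "markov_kernel M P"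
    and h: "h \<in> borel_measurable (PiM {..<m} (\<lambda>_. M))" and bd: "bounded_differences M m d h"
    and d: "0 \<le> d k" and a: "a \<in> space M" and k: "k < m"
  shows "telescope_exp P m h a k \<in> borel_measurable M"
    and "\<forall>w\<in>space M. \<bar>telescope_exp P m h a k w\<bar> \<le> d k"
proof -
  note G = telescope_step_measurable_bounded[OF h bd d a k]
  show "telescope_exp P m h a k \<in> borel_measurable M"
    unfolding telescope_exp_def[abs_def] by (rule path_exp_scons_measurable[OF K G])
  show "\<forall>w\<in>space M. \<bar>telescope_exp P m h a k w\<bar> \<le> d k"
    unfolding telescope_exp_def using abs_path_exp_scons_le[OF K G] by blast
qed

lemma path_exp_telescope:
  assumes K: "markov_kernel M P"
    and h: "h \<in> borel_measurable (PiM {..<m} (\<lambda>_. M))" and bd: "bounded_differences M m d h"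
    and d: "\<forall>k<m. 0 \<le> d k" and a: "a \<in> space M" and z: "z \<in> space M"
  shows "path_exp P m h z = h (prefix_const m a (\<lambda>_. undefined))
     + (\<Sum>k<m. \<integral>w. telescope_exp P m h a k w \<partial>kpow M P (Suc k) z)"
proof -
  let ?D = "\<lambda>k ys. telescope_step h a k (\<lambda>j. ys (j + k))"
  have D: "?D k \<in> borel_measurable (PiM {..<m} (\<lambda>_. M))" if "k \<in> {..<m}" for k
    using measurable_compose[OF measurable_shift measurable_telescope_step[OF h a]] that by simp
  have D_bound: "\<forall>ys\<in>space (PiM {..<m} (\<lambda>_. M)). \<bar>?D k ys\<bar> \<le> d k" if "k \<in> {..<m}" for k
  proof
    fix ys assume "ys \<in> space (PiM {..<m} (\<lambda>_. M))"
    then have "(\<lambda>j. ys (j + k)) \<in> space (PiM {..<m - k} (\<lambda>_. M))"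
      by (rule measurable_space[OF measurable_shift])
    then show "\<bar>?D k ys\<bar> \<le> d k"
      using d that by (intro abs_telescope_step_le[OF bd _ a]) auto
  qed
  have "path_exp P m h z = path_exp P m (\<lambda>ys. h (prefix_const m a (\<lambda>_. undefined)) + (\<Sum>k<m. ?D k ys)) z"
    by (intro path_exp_cong[OF K _ z] ballI telescope_step_sum)
  also have "\<dots> = h (prefix_const m a (\<lambda>_. undefined)) + (\<Sum>k<m. path_exp P m (?D k) z)"
    by (rule path_exp_const_add_sum[OF K finite_lessThan D D_bound z])
  also have "(\<Sum>k<m. path_exp P m (?D k) z) = (\<Sum>k<m. \<integral>w. telescope_exp P m h a k w \<partial>kpow M P (Suc k) z)"
  proof (rule sum.cong[OF refl])
    fix k assume "k \<in> {..<m}"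
    then have "m = k + Suc (m - Suc k)" and G: "0 \<le> d k" "k < m" using d by auto
    then show "path_exp P m (?D k) z = (\<integral>w. telescope_exp P m h a k w \<partial>kpow M P (Suc k) z)"
      using path_exp_shift[OF K telescope_step_measurable_bounded[OF h bd G(1) a G(2)] z, of k]
      by (simp add: telescope_exp_def)
  qed
  finally show ?thesis .
qed

lemma path_exp_bounded_differences_dTV:
  assumes K: "markov_kernel M P" and inv: "invariant_prob M P \<pi>"
    and h: "h \<in> borel_measurable (PiM {..<m} (\<lambda>_. M))" and bd: "bounded_differences M m d h"
    and d: "\<forall>k<m. 0 \<le> d k" and a: "a \<in> space M"
  shows "\<bar>path_exp P m h a - (\<integral>z. path_exp P m h z \<partial>\<pi>)\<bar>
           \<le> 2 * (\<Sum>k<m. d k * dTV M (kpow M P (Suc k) a) \<pi>)"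
proof -
  let ?K0 = "h (prefix_const m a (\<lambda>_. undefined))"
  let ?\<phi> = "telescope_exp P m h a"
  have \<pi>: "prob_space \<pi>" "sets \<pi> = sets M" using inv by (auto simp: invariant_prob_def)
  have \<phi>: "?\<phi> k \<in> borel_measurable M" "\<forall>w\<in>space M. \<bar>?\<phi> k w\<bar> \<le> d k" if "k \<in> {..<m}" for k
    using telescope_exp_measurable_bounded[OF K h bd _ a] d that by auto
  have int: "integrable \<pi> (\<lambda>z. \<integral>w. ?\<phi> k w \<partial>kpow M P (Suc k) z)" if k: "k \<in> {..<m}" for k
  proof (rule integrable_bounded_prob[OF \<pi>])
    show "(\<lambda>z. \<integral>w. ?\<phi> k w \<partial>kpow M P (Suc k) z) \<in> borel_measurable M"
      by (intro measurable_compose[OF measurable_prob_algebraD[OF kpow_measurable[OF K]]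
          integral_measurable_subprob_algebra] \<phi>(1)[OF k])
    show "\<forall>z\<in>space M. \<bar>\<integral>w. ?\<phi> k w \<partial>kpow M P (Suc k) z\<bar> \<le> d k"
      using abs_integral_le_bound_prob[OF kpowD[OF K] \<phi>[OF k]] by blast
  qed
  have "(\<integral>z. path_exp P m h z \<partial>\<pi>) = (\<integral>z. ?K0 + (\<Sum>k<m. \<integral>w. ?\<phi> k w \<partial>kpow M P (Suc k) z) \<partial>\<pi>)"
    using path_exp_telescope[OF K h bd d a] sets_eq_imp_space_eq[OF \<pi>(2)]
    by (intro Bochner_Integration.integral_cong) auto
  also have "\<dots> = ?K0 + (\<Sum>k<m. \<integral>z. (\<integral>w. ?\<phi> k w \<partial>kpow M P (Suc k) z) \<partial>\<pi>)"
    using int by (rule integral_const_add_sum_prob[OF \<pi>(1) finite_lessThan])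
  also have "\<dots> = ?K0 + (\<Sum>k<m. \<integral>w. ?\<phi> k w \<partial>\<pi>)"
    using integral_kpow_invariant[OF K inv \<phi>] by (simp del: kpow.simps)
  finally have "path_exp P m h a - (\<integral>z. path_exp P m h z \<partial>\<pi>)
      = (\<Sum>k<m. (\<integral>w. ?\<phi> k w \<partial>kpow M P (Suc k) a) - (\<integral>w. ?\<phi> k w \<partial>\<pi>))"
    using path_exp_telescope[OF K h bd d a a] by (simp add: sum_subtractf)
  also have "\<bar>\<dots>\<bar> \<le> (\<Sum>k<m. 2 * d k * dTV M (kpow M P (Suc k) a) \<pi>)"
    by (intro order.trans[OF sum_abs] sum_mono abs_integral_diff_le_dTV[OF kpowD[OF K a] \<pi> \<phi>])
  finally show ?thesis by (simp add: sum_distrib_left mult.assoc)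
qed

lemma measurable_glue:
  assumes i: "i < n" and x: "\<forall>l\<le>i. x l \<in> space M"
  shows "glue n i x \<in> PiM {..<n - 1 - i} (\<lambda>_. M) \<rightarrow>\<^sub>M PiM {..<n} (\<lambda>_. M)"
proof (rule measurable_PiM_single')
  fix l assume l: "l \<in> {..<n}"
  show "(\<lambda>ys. glue n i x ys l) \<in> PiM {..<n - 1 - i} (\<lambda>_. M) \<rightarrow>\<^sub>M M"
  proof (cases "l \<le> i")
    case False
    then have "l - i - 1 \<in> {..<n - 1 - i}" using l by auto
    then show ?thesis using False l by (simp add: glue_def)
  qed (simp add: glue_def x)
next
  show "glue n i x \<in> space (PiM {..<n - 1 - i} (\<lambda>_. M)) \<rightarrow> (\<Pi>\<^sub>E l\<in>{..<n}. space M)"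
    using i x by (auto simp: space_PiM PiE_iff extensional_def glue_def)
qed

lemma bounded_differences_glue:
  assumes i: "i < n" and x: "\<forall>l\<le>i. x l \<in> space M" and bd: "bounded_differences M n c f"
  shows "bounded_differences M (n - 1 - i) (\<lambda>k. c (Suc i + k)) (\<lambda>ys. f (glue n i x ys))"
  unfolding bounded_differences_def
proof (intro ballI)
  fix ys zs assume ys: "ys \<in> space (PiM {..<n - 1 - i} (\<lambda>_. M))"
    and zs: "zs \<in> space (PiM {..<n - 1 - i} (\<lambda>_. M))"
  let ?\<delta> = "\<lambda>j. c j * (if glue n i x ys j \<noteq> glue n i x zs j then 1 else 0)"
  have split: "{..<n} = {..<Suc i} \<union> {Suc i..<n}" using i by auto
  have "\<bar>f (glue n i x ys) - f (glue n i x zs)\<bar> \<le> (\<Sum>j<n. ?\<delta> j)"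
    using bd measurable_space[OF measurable_glue[OF i x] ys] measurable_space[OF measurable_glue[OF i x] zs]
    by (simp add: bounded_differences_def)
  also have "(\<Sum>j<n. ?\<delta> j) = (\<Sum>j<Suc i. ?\<delta> j) + (\<Sum>j=Suc i..<n. ?\<delta> j)"
    unfolding split by (rule sum.union_disjoint) auto
  also have "(\<Sum>j<Suc i. ?\<delta> j) = 0"
    by (intro sum.neutral) (simp add: glue_def)
  also have "(\<Sum>j=Suc i..<n. ?\<delta> j) = (\<Sum>k<n - 1 - i. c (Suc i + k) * (if ys k \<noteq> zs k then 1 else 0))"
    by (simp add: sum.atLeastLessThan_shift_0[of _ "Suc i"] atLeast0LessThan glue_def)
  finally show "\<bar>f (glue n i x ys) - f (glue n i x zs)\<bar>
      \<le> (\<Sum>k<n - 1 - i. c (Suc i + k) * (if ys k \<noteq> zs k then 1 else 0))" by simp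
qed

theorem lemma2:
  fixes M :: "'a measure" and P :: "'a \<Rightarrow> 'a measure" and \<pi> :: "'a measure"
    and C :: "'a set" and u Mb r L :: real
    and n :: nat and c :: "nat \<Rightarrow> real" and f :: "(nat \<Rightarrow> 'a) \<Rightarrow> real"
    and i :: nat and x :: "nat \<Rightarrow> 'a"
  assumes kernel: "markov_kernel M P"
    and irred: "irreducible M P" and aper: "aperiodic M P"
    and inv: "invariant_prob M P \<pi>"
    and uniq: "\<And>\<nu>. invariant_prob M P \<nu> \<Longrightarrow> \<nu> = \<pi>"
    and C_meas: "C \<in> sets M" and C_ne: "C \<noteq> {}"
    and u_gt: "u > 1" and Mb_pos: "Mb > 0"
    and drift: "\<forall>y\<in>C. exp_pow_return M P C u y \<le> ennreal Mb"
    and r_pos: "0 < r" and r_lt: "r < 1" and L_ge: "L \<ge> 1"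
    and geo: "\<forall>y\<in>C. \<forall>k. dTV M (kpow M P k y) \<pi> \<le> L * r ^ k"
    and n_ge: "n \<ge> 1"
    and c_nonneg: "\<forall>j<n. c j \<ge> 0"
    and f_meas: "f \<in> borel_measurable (PiM {..<n} (\<lambda>_. M))"
    and f_bd: "\<forall>y\<in>space (PiM {..<n} (\<lambda>_. M)). \<forall>z\<in>space (PiM {..<n} (\<lambda>_. M)).
                 \<bar>f y - f z\<bar> \<le> (\<Sum>j<n. c j * (if y j \<noteq> z j then 1 else 0))"
    and i_lt: "i < n"
    and x_sp: "\<forall>k<i. x k \<in> space M" and x_C: "x i \<in> C"
  shows "\<bar>g_fun P n f i x - g_pi P \<pi> n f i x\<bar>
           \<le> 2 * L * (\<Sum>j=i+1..n-1. c j * r ^ (j - i))"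
proof -
  have a: "x i \<in> space M" using x_C C_meas sets.sets_into_space by blast
  then have x: "\<forall>l\<le>i. x l \<in> space M" using x_sp le_neq_implies_less by blast
  have h: "(\<lambda>ys. f (glue n i x ys)) \<in> borel_measurable (PiM {..<n - 1 - i} (\<lambda>_. M))"
    by (rule measurable_compose[OF measurable_glue[OF i_lt x] f_meas])
  have bd: "bounded_differences M (n - 1 - i) (\<lambda>k. c (Suc i + k)) (\<lambda>ys. f (glue n i x ys))"
    using bounded_differences_glue[OF i_lt x] f_bd by (simp add: bounded_differences_def)
  have "\<bar>g_fun P n f i x - g_pi P \<pi> n f i x\<bar>
      \<le> 2 * (\<Sum>k<n - 1 - i. c (Suc i + k) * dTV M (kpow M P (Suc k) (x i)) \<pi>)"
    unfolding g_fun_def g_pi_def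
    using c_nonneg by (intro path_exp_bounded_differences_dTV[OF kernel inv h bd _ a]) auto
  also have "\<dots> \<le> 2 * (\<Sum>k<n - 1 - i. c (Suc i + k) * (L * r ^ Suc k))"
    using geo x_C c_nonneg by (intro mult_left_mono sum_mono) (auto simp del: kpow.simps power_Suc)
  also have "\<dots> = 2 * L * (\<Sum>j=i+1..n-1. c j * r ^ (j - i))"
  proof -
    have "{i+1..n-1} = {Suc i..<n}" using n_ge by auto
    then show ?thesis
      by (simp add: sum.atLeastLessThan_shift_0[of _ "Suc i"] atLeast0LessThan sum_distrib_left mult_ac)
  qed
  finally show ?thesis .
qed

end
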